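(* Suppose (A1) and (A3) below hold. Fix $n\ge0$, $\alpha>1$ and a step size $0<\gamma\le\frac{\alpha-1}{\alpha BC^{1/2}}$; let $g=P_{\mu_n}\nabla\log(\mu_n/\pi)$ and $\phi_t=I-tg$. Then for every $x\in\mathbb R^d$ and $t\ge0$, $\|tJg(x)\|_{op}\le tB\sqrt C$; for every $0\le t<\frac{1}{B\sqrt C}$, $\phi_t$ is a diffeomorphism of $\mathbb R^d$; and for every $t\in[0,\gamma]$ and $x\in\mathbb R^d$, $\|(J\phi_t(x))^{-1}\|_{op}\le\alpha$. (A1) There exists $B>0$ with $\|k(x,\cdot)\|_{\mathcal H_0}\le B$ and $\big(\sum_{i=1}^d\|\partial_{x_i}k(x,\cdot)\|_{\mathcal H_0}^2\big)^{1/2}\le B$ for all $x$. (A3) There exists $C>0$ with $I_{Stein}(\mu_m|\pi)<C$ for all $m\ge0$.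
   Context: Target $\pi\propto e^{-V}$ on $\mathbb R^d$, $V\in C^2$; measures with densities identified with densities. $k$ positive semi-definite kernel with RKHS $\mathcal H_0$, $\mathcal H=\mathcal H_0^d$ with $\langle f,g\rangle_{\mathcal H}=\sum_i\langle f_i,g_i\rangle_{\mathcal H_0}$, $\int k(x,x)d\mu(x)<\infty$ for all $\mu\in\mathcal P_2$. $S_\mu f=\int k(x,\cdot)f(x)d\mu(x)\in\mathcal H$, $P_\mu f(y)=\int k(x,y)f(x)d\mu(x)$. $I_{Stein}(\mu|\pi)=\|S_\mu\nabla\log(\mu/\pi)\|_{\mathcal H}^2$. SVGD iterates with step $\gamma$: $\mu_0\in\mathcal P_2$ with density, $\mu_{m+1}=(I-\gamma P_{\mu_m}\nabla\log(\mu_m/\pi))_\#\mu_m$. $J$ denotes the Jacobian matrix, $\|\cdot\|_{op}$ the operator norm. *)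

theory Defs
  imports "HOL-Probability.Probability"
begin

definition dmeas :: "('a::euclidean_space \<Rightarrow> real) \<Rightarrow> 'a measure" where
  "dmeas p = density lborel (\<lambda>x. ennreal (p x))"

definition pi_dens :: "('a::euclidean_space \<Rightarrow> real) \<Rightarrow> 'a \<Rightarrow> real" where
  "pi_dens V x = exp (- V x) / (\<integral>y. exp (- V y) \<partial>lborel)"

definition grad :: "('a::euclidean_space \<Rightarrow> real) \<Rightarrow> 'a \<Rightarrow> 'a" where
  "grad f x = (\<Sum>b\<in>Basis. frechet_derivative f (at x) b *\<^sub>R b)"

definition score :: "('a::euclidean_space \<Rightarrow> real) \<Rightarrow> ('a \<Rightarrow> real) \<Rightarrow> 'a \<Rightarrow> 'a" where
  "score V p = grad (\<lambda>y. ln (p y / pi_dens V y))"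

definition P_op :: "('a::euclidean_space \<Rightarrow> 'a \<Rightarrow> real) \<Rightarrow> 'a measure \<Rightarrow> ('a \<Rightarrow> 'a) \<Rightarrow> 'a \<Rightarrow> 'a" where
  "P_op k \<mu> f y = (\<integral>x. k x y *\<^sub>R f x \<partial>\<mu>)"

text \<open>S_mu f as an element of H = H0^d, given by its components (indexed by the
  standard basis); the RKHS H0 is the Hilbert space 'h with feature map Phi,
  k(x,.) = Phi x.\<close>
definition S_op :: "('a::euclidean_space \<Rightarrow> 'h::{real_inner,banach,second_countable_topology})
     \<Rightarrow> 'a measure \<Rightarrow> ('a \<Rightarrow> 'a) \<Rightarrow> 'a \<Rightarrow> 'h" where
  "S_op \<Phi> \<mu> f b = (\<integral>x. (f x \<bullet> b) *\<^sub>R \<Phi> x \<partial>\<mu>)"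

definition H_norm2 :: "('a::euclidean_space \<Rightarrow> 'h::real_normed_vector) \<Rightarrow> real" where
  "H_norm2 F = (\<Sum>b\<in>Basis. (norm (F b))\<^sup>2)"

definition I_Stein :: "('a::euclidean_space \<Rightarrow> 'h::{real_inner,banach,second_countable_topology})
     \<Rightarrow> ('a \<Rightarrow> real) \<Rightarrow> ('a \<Rightarrow> real) \<Rightarrow> real" where
  "I_Stein \<Phi> V p = H_norm2 (S_op \<Phi> (dmeas p) (score V p))"

definition C1_map :: "('a::euclidean_space \<Rightarrow> 'b::real_normed_vector) \<Rightarrow> bool" where
  "C1_map f \<longleftrightarrow> (\<exists>f'. (\<forall>x. (f has_derivative blinfun_apply (f' x)) (at x)) \<and> continuous_on UNIV f')"

definition diffeo :: "('a::euclidean_space \<Rightarrow> 'a) \<Rightarrow> bool" where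
  "diffeo f \<longleftrightarrow> bij f \<and> C1_map f \<and> C1_map (inv f)"

end

theory Submission
  imports Defs
begin

(* By the reproducing property the SVGD field g = P_mu grad log(mu/pi) is
   y |-> (<S_i, k(y,.)>)_i with S = S_mu grad log(mu/pi), so its Jacobian is S composed
   with the derivative of the feature map and has norm at most B * sqrt(I_Stein) < B sqrt C.
   For t B sqrt C < 1 the map t g is therefore a contraction with continuous derivative:
   I - t g is bijective by Banach's fixed point theorem with Lipschitz inverse, the
   inverse function theorem makes the inverse C^1, and the perturbation bound
   |(I - A)^-1| <= 1 / (1 - |A|) gives |(J phi_t)^-1| <= 1 / (1 - t B sqrt C) <= alpha
   for t <= gamma. *)

lemma norm_eq_L2_set_Basis:
  fixes x :: "'a::euclidean_space"
  shows "norm x = L2_set (\<lambda>b. x \<bullet> b) Basis"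
  by (simp add: L2_set_def norm_eq_sqrt_inner euclidean_inner[of x x] power2_eq_square)

lemma norm_blinfun_le_L2_set_Basis:
  fixes L :: "'a::euclidean_space \<Rightarrow>\<^sub>L 'b::real_normed_vector"
  shows "norm L \<le> L2_set (\<lambda>b. norm (blinfun_apply L b)) Basis"
proof (rule norm_blinfun_bound)
  fix v
  have "blinfun_apply L v = blinfun_apply L (\<Sum>b\<in>Basis. (v \<bullet> b) *\<^sub>R b)"
    by (simp add: euclidean_representation)
  also have "\<dots> = (\<Sum>b\<in>Basis. (v \<bullet> b) *\<^sub>R blinfun_apply L b)"
    by (simp add: blinfun.sum_right blinfun.scaleR_right)
  finally have "norm (blinfun_apply L v) \<le> (\<Sum>b\<in>Basis. norm ((v \<bullet> b) *\<^sub>R blinfun_apply L b))"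
    by (simp only: norm_sum)
  also have "\<dots> = (\<Sum>b\<in>Basis. \<bar>v \<bullet> b\<bar> * \<bar>norm (blinfun_apply L b)\<bar>)"
    by simp
  also have "\<dots> \<le> L2_set (\<lambda>b. v \<bullet> b) Basis * L2_set (\<lambda>b. norm (blinfun_apply L b)) Basis"
    by (rule L2_set_mult_ineq)
  finally show "norm (blinfun_apply L v) \<le> L2_set (\<lambda>b. norm (blinfun_apply L b)) Basis * norm v"
    by (simp add: norm_eq_L2_set_Basis[of v] mult.commute)
qed simp

(* Reading S :: H = H0^d as the linear map R^d -> H0, v |-> sum_i v_i S_i,
   inner_components S is its adjoint H0 -> R^d. *)
definition inner_components :: "('a::euclidean_space \<Rightarrow> 'h::real_inner) \<Rightarrow> 'h \<Rightarrow> 'a" where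
  "inner_components S w = (\<Sum>b\<in>Basis. (S b \<bullet> w) *\<^sub>R b)"

lemma inner_components_inner_Basis:
  "b \<in> Basis \<Longrightarrow> inner_components S w \<bullet> b = S b \<bullet> w"
  by (simp add: inner_components_def inner_sum_left inner_Basis if_distrib cong: if_cong)

lemma bounded_linear_inner_components: "bounded_linear (inner_components S)"
  unfolding inner_components_def
  by (intro bounded_linear_sum bounded_linear_compose[OF bounded_linear_scaleR_left]
      bounded_linear_inner_right)

lemma norm_inner_components_le:
  "norm (inner_components S w) \<le> sqrt (H_norm2 S) * norm w"
proof -
  have "norm (inner_components S w) = sqrt (\<Sum>b\<in>Basis. (S b \<bullet> w)\<^sup>2)"
    by (simp add: norm_eq_L2_set_Basis L2_set_def inner_components_inner_Basis)
  also have "\<dots> \<le> sqrt (\<Sum>b\<in>Basis. (norm (S b) * norm w)\<^sup>2)"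
  proof (intro real_sqrt_le_mono sum_mono)
    fix b
    have "\<bar>S b \<bullet> w\<bar>\<^sup>2 \<le> (norm (S b) * norm w)\<^sup>2"
      by (intro power_mono Cauchy_Schwarz_ineq2 abs_ge_zero)
    then show "(S b \<bullet> w)\<^sup>2 \<le> (norm (S b) * norm w)\<^sup>2" by simp
  qed
  also have "\<dots> = sqrt (H_norm2 S) * norm w"
    by (simp add: H_norm2_def power_mult_distrib real_sqrt_mult flip: sum_distrib_right)
  finally show ?thesis .
qed

lemma blinfun_apply_Blinfun_inner_components [simp]:
  "blinfun_apply (Blinfun (inner_components S)) = inner_components S"
  by (rule bounded_linear_Blinfun_apply[OF bounded_linear_inner_components])

lemma norm_Blinfun_inner_components_le:
  "norm (Blinfun (inner_components S)) \<le> sqrt (H_norm2 S)"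
proof (rule norm_blinfun_bound)
  show "0 \<le> sqrt (H_norm2 S)" by (simp add: H_norm2_def sum_nonneg)
qed (simp add: norm_inner_components_le)

lemma P_op_eq_inner_components_S_op:
  assumes kernel: "\<And>x y. k x y = \<Phi> x \<bullet> \<Phi> y"
    and integrable: "\<And>b. b \<in> Basis \<Longrightarrow> integrable \<mu> (\<lambda>x. (f x \<bullet> b) *\<^sub>R \<Phi> x)"
  shows "P_op k \<mu> f y = inner_components (S_op \<Phi> \<mu> f) (\<Phi> y)"
proof -
  have integrand: "k x y *\<^sub>R f x = (\<Sum>b\<in>Basis. (((f x \<bullet> b) *\<^sub>R \<Phi> x) \<bullet> \<Phi> y) *\<^sub>R b)" for x
    by (subst euclidean_representation[of "f x", symmetric])
       (simp add: scaleR_sum_right kernel mult.commute)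
  have "P_op k \<mu> f y = (\<Sum>b\<in>Basis. (\<integral>x. (((f x \<bullet> b) *\<^sub>R \<Phi> x) \<bullet> \<Phi> y) *\<^sub>R b \<partial>\<mu>))"
    unfolding P_op_def integrand
    by (intro Bochner_Integration.integral_sum integrable_scaleR_left integrable_inner_left integrable)
  also have "\<dots> = inner_components (S_op \<Phi> \<mu> f) (\<Phi> y)"
    unfolding inner_components_def S_op_def
    by (intro sum.cong refl)
       (simp only: integral_scaleR_left integral_inner_left integrable_inner_left integrable)
  finally show ?thesis .
qed

(* Junk unless blinfun_apply L is bijective. *)
definition blinfun_inv :: "('a::euclidean_space \<Rightarrow>\<^sub>L 'a) \<Rightarrow> 'a \<Rightarrow>\<^sub>L 'a" where
  "blinfun_inv L = Blinfun (inv (blinfun_apply L))"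

lemma blinfun_apply_blinfun_inv:
  assumes "bij (blinfun_apply L)"
  shows "blinfun_apply (blinfun_inv L) = inv (blinfun_apply L)"
  unfolding blinfun_inv_def
  by (intro bounded_linear_Blinfun_apply inj_linear_imp_inv_bounded_linear
      blinfun.bounded_linear_right bij_is_inj assms)

lemma blinfun_inv_inverse:
  assumes "bij (blinfun_apply L)"
  shows "blinfun_apply L (blinfun_apply (blinfun_inv L) v) = v"
    and "blinfun_apply (blinfun_inv L) (blinfun_apply L v) = v"
  using assms by (simp_all add: blinfun_apply_blinfun_inv bij_is_inj bij_is_surj surj_f_inv_f)

lemma norm_minus_blinfun_apply_ge:
  fixes A :: "'a::real_normed_vector \<Rightarrow>\<^sub>L 'a"
  shows "(1 - norm A) * norm v \<le> norm (v - blinfun_apply A v)"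
  using norm_triangle_ineq2[of v "blinfun_apply A v"] norm_blinfun[of A v]
  by (simp add: algebra_simps)

lemma bij_id_minus_blinfun:
  fixes A :: "'a::euclidean_space \<Rightarrow>\<^sub>L 'a"
  assumes "norm A < 1"
  shows "bij (blinfun_apply (id_blinfun - A))"
proof -
  have lin: "linear (blinfun_apply (id_blinfun - A))"
    by (rule bounded_linear.linear[OF blinfun.bounded_linear_right])
  have "inj (blinfun_apply (id_blinfun - A))"
    unfolding linear_inj_iff_eq_0[OF lin]
  proof (intro allI impI)
    fix v assume "blinfun_apply (id_blinfun - A) v = 0"
    then have "(1 - norm A) * norm v \<le> 0"
      using norm_minus_blinfun_apply_ge[of A v] by (simp add: blinfun.diff_left)
    then show "v = 0" using assms by (simp add: mult_le_0_iff)
  qed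
  then show ?thesis
    by (simp add: bij_def linear_inj_imp_surj lin)
qed

lemma norm_blinfun_inv_id_minus_le:
  fixes A :: "'a::euclidean_space \<Rightarrow>\<^sub>L 'a"
  assumes "norm A < 1"
  shows "norm (blinfun_inv (id_blinfun - A)) \<le> 1 / (1 - norm A)"
proof (rule norm_blinfun_bound)
  fix v
  let ?w = "blinfun_apply (blinfun_inv (id_blinfun - A)) v"
  have "(1 - norm A) * norm ?w \<le> norm v"
    using norm_minus_blinfun_apply_ge[of A ?w] blinfun_inv_inverse(1)[OF bij_id_minus_blinfun[OF assms]]
    by (simp add: blinfun.diff_left)
  then show "norm ?w \<le> 1 / (1 - norm A) * norm v"
    using assms by (simp add: field_simps)
qed (use assms in simp)

lemma continuous_on_blinfun_inv:
  fixes D :: "'x::topological_space \<Rightarrow> 'a::euclidean_space \<Rightarrow>\<^sub>L 'a"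
  assumes cont: "continuous_on S D" and bij: "\<And>x. x \<in> S \<Longrightarrow> bij (blinfun_apply (D x))"
    and bound: "\<And>x. x \<in> S \<Longrightarrow> norm (blinfun_inv (D x)) \<le> M"
  shows "continuous_on S (\<lambda>x. blinfun_inv (D x))"
  unfolding continuous_on_def
proof
  fix x assume x: "x \<in> S"
  have M: "0 \<le> M" using bound[OF x] norm_ge_zero[of "blinfun_inv (D x)"] by linarith
  have diff_le: "norm (blinfun_inv (D y) - blinfun_inv (D x)) \<le> norm (D y - D x) * (M * M)"
    if y: "y \<in> S" for y
  proof -
    have "blinfun_inv (D y) - blinfun_inv (D x) = blinfun_inv (D y) o\<^sub>L (D x - D y) o\<^sub>L blinfun_inv (D x)"
      by (rule blinfun_eqI)
         (simp add: blinfun.diff_left blinfun.diff_right blinfun_inv_inverse bij x y)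
    also have "norm \<dots> \<le> norm (blinfun_inv (D y)) * norm (D x - D y) * norm (blinfun_inv (D x))"
      by (intro order_trans[OF norm_blinfun_compose] mult_right_mono norm_blinfun_compose norm_ge_zero)
    also have "\<dots> \<le> M * norm (D x - D y) * M"
      by (intro mult_mono mult_right_mono bound x y M norm_ge_zero mult_nonneg_nonneg)
    finally show ?thesis by (simp add: ac_simps norm_minus_commute)
  qed
  have "((\<lambda>y. D y - D x) \<longlongrightarrow> 0) (at x within S)"
    using cont x by (simp add: continuous_on_def LIM_zero)
  moreover have "\<forall>\<^sub>F y in at x within S.
      norm (blinfun_inv (D y) - blinfun_inv (D x)) \<le> norm (D y - D x) * (M * M)"
    unfolding eventually_at_filter by (rule always_eventually) (simp add: diff_le)
  ultimately have "((\<lambda>y. blinfun_inv (D y) - blinfun_inv (D x)) \<longlongrightarrow> 0) (at x within S)"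
    by (rule tendsto_0_le)
  then show "((\<lambda>y. blinfun_inv (D y)) \<longlongrightarrow> blinfun_inv (D x)) (at x within S)"
    by (rule LIM_zero_cancel)
qed

lemma norm_minus_lipschitz_ge:
  fixes g :: "'a::real_normed_vector \<Rightarrow> 'a"
  assumes "lipschitz_on L UNIV g"
  shows "(1 - L) * norm (x - y) \<le> norm ((x - g x) - (y - g y))"
proof -
  have "norm (x - y) - norm (g x - g y) \<le> norm ((x - y) - (g x - g y))"
    by (rule norm_triangle_ineq2)
  moreover have "norm (g x - g y) \<le> L * norm (x - y)"
    using lipschitz_on_normD[OF assms] by simp
  ultimately show ?thesis by (simp add: algebra_simps)
qed

lemma bij_minus_contraction:
  fixes g :: "'a::banach \<Rightarrow> 'a"
  assumes lip: "lipschitz_on L UNIV g" and L: "L < 1"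
  shows "bij (\<lambda>x. x - g x)"
proof (rule bijI)
  show "inj (\<lambda>x. x - g x)"
  proof (rule injI)
    fix x y assume "x - g x = y - g y"
    then have "(1 - L) * norm (x - y) \<le> 0"
      using norm_minus_lipschitz_ge[OF lip, of x y] by simp
    then show "x = y" using L by (simp add: mult_le_0_iff)
  qed
  have "\<exists>x. y = x - g x" for y
  proof -
    \<comment> \<open>A preimage of y is a fixed point of the contraction x \<mapsto> y + g x.\<close>
    have "\<exists>!x. y + g x = x"
      using lip L lipschitz_on_nonneg[OF lip]
      by (intro banach_fix_type) (auto simp: dist_norm lipschitz_on_normD)
    then obtain x where "y + g x = x" by blast
    then show ?thesis by (auto simp: algebra_simps)
  qed
  then show "surj (\<lambda>x. x - g x)" by (simp add: surj_def)
qed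

lemma lipschitz_on_inv_minus_contraction:
  fixes g :: "'a::banach \<Rightarrow> 'a"
  assumes lip: "lipschitz_on L UNIV g" and L: "L < 1"
  shows "lipschitz_on (1 / (1 - L)) UNIV (inv (\<lambda>x. x - g x))"
proof (rule lipschitz_onI)
  let ?G = "inv (\<lambda>x. x - g x)"
  have surj: "surj (\<lambda>x. x - g x)" using bij_minus_contraction[OF assms] by (rule bij_is_surj)
  fix x y :: 'a
  have "(1 - L) * norm (?G x - ?G y) \<le> norm (x - y)"
    using norm_minus_lipschitz_ge[OF lip, of "?G x" "?G y"]
    by (metis (no_types, lifting) surj surj_f_inv_f)
  then show "dist (?G x) (?G y) \<le> 1 / (1 - L) * dist x y"
    using L by (simp add: dist_norm field_simps)
qed (use L in simp)

lemma C1_map_inv: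
  fixes F :: "'a::euclidean_space \<Rightarrow> 'a" and DF :: "'a \<Rightarrow> 'a \<Rightarrow>\<^sub>L 'a"
  assumes bij_F: "bij F" and inv_cont: "continuous_on UNIV (inv F)"
    and F_der: "\<And>x. (F has_derivative blinfun_apply (DF x)) (at x)"
    and DF_cont: "continuous_on UNIV DF"
    and DF_bij: "\<And>x. bij (blinfun_apply (DF x))"
    and DF_inv_bound: "\<And>x. norm (blinfun_inv (DF x)) \<le> M"
  shows "C1_map (inv F)"
  unfolding C1_map_def
proof (intro exI conjI allI)
  show "(inv F has_derivative blinfun_apply (blinfun_inv (DF (inv F y)))) (at y)" for y
  proof -
    have "(inv F has_derivative blinfun_apply (blinfun_inv (DF (inv F y)))) (at (F (inv F y)))"
    proof (rule has_derivative_inverse_on[where S=UNIV and f'="\<lambda>x. blinfun_apply (DF x)"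
          and g'="\<lambda>x. blinfun_apply (blinfun_inv (DF x))"])
      show "inv F (F x) = x" for x using bij_F by (simp add: bij_is_inj)
      show "blinfun_apply (DF (inv F y)) \<circ> blinfun_apply (blinfun_inv (DF (inv F y))) = id"
        using blinfun_inv_inverse(1)[OF DF_bij] by auto
    qed (simp_all add: F_der)
    then show ?thesis
      using bij_F by (simp add: bij_is_surj surj_f_inv_f)
  qed
  show "continuous_on UNIV (\<lambda>y. blinfun_inv (DF (inv F y)))"
    using continuous_on_compose[OF inv_cont
        continuous_on_subset[OF continuous_on_blinfun_inv[OF DF_cont DF_bij DF_inv_bound]]]
    by (simp add: o_def)
qed

lemma diffeo_minus_contraction:
  fixes g :: "'a::euclidean_space \<Rightarrow> 'a" and Dg :: "'a \<Rightarrow> 'a \<Rightarrow>\<^sub>L 'a"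
  assumes der: "\<And>x. (g has_derivative blinfun_apply (Dg x)) (at x)"
    and cont: "continuous_on UNIV Dg"
    and bound: "\<And>x. norm (Dg x) \<le> L" and L: "L < 1"
  shows "diffeo (\<lambda>x. x - g x)"
proof -
  define DF where "DF x = id_blinfun - Dg x" for x
  have lip: "lipschitz_on L UNIV g"
    using der bound order_trans[OF norm_ge_zero bound]
    by (intro bounded_derivative_imp_lipschitz) (auto simp: norm_blinfun.rep_eq[symmetric])
  have F_der: "((\<lambda>x. x - g x) has_derivative blinfun_apply (DF x)) (at x)" for x
    by (auto intro!: derivative_eq_intros der simp: DF_def blinfun.diff_left)
  have DF_cont: "continuous_on UNIV DF"
    unfolding DF_def[abs_def] by (intro continuous_intros cont)
  have norm_Dg: "norm (Dg x) < 1" for x using bound[of x] L by linarith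
  have DF_inv_bound: "norm (blinfun_inv (DF x)) \<le> 1 / (1 - L)" for x
  proof -
    have "norm (blinfun_inv (DF x)) \<le> 1 / (1 - norm (Dg x))"
      unfolding DF_def by (rule norm_blinfun_inv_id_minus_le[OF norm_Dg])
    also have "\<dots> \<le> 1 / (1 - L)"
      using bound[of x] L by (intro divide_left_mono) auto
    finally show ?thesis .
  qed
  have "bij (\<lambda>x. x - g x)" by (rule bij_minus_contraction[OF lip L])
  moreover have "C1_map (inv (\<lambda>x. x - g x))"
    using DF_inv_bound
    by (intro C1_map_inv[OF _ _ F_der DF_cont] bij_minus_contraction[OF lip L]
        lipschitz_on_continuous_on[OF lipschitz_on_inv_minus_contraction[OF lip L]])
       (simp add: DF_def bij_id_minus_blinfun[OF norm_Dg])
  moreover have "C1_map (\<lambda>x. x - g x)"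
    unfolding C1_map_def using F_der DF_cont by blast
  ultimately show ?thesis by (simp add: diffeo_def)
qed

lemma bij_onorm_inv_id_minus_le:
  fixes A :: "'a::euclidean_space \<Rightarrow>\<^sub>L 'a"
  assumes "norm A \<le> s" and "s < 1"
  shows "bij (blinfun_apply (id_blinfun - A))"
    and "onorm (inv (blinfun_apply (id_blinfun - A))) \<le> 1 / (1 - s)"
proof -
  have A: "norm A < 1" using assms by linarith
  show bij: "bij (blinfun_apply (id_blinfun - A))" by (rule bij_id_minus_blinfun[OF A])
  have "onorm (inv (blinfun_apply (id_blinfun - A))) = norm (blinfun_inv (id_blinfun - A))"
    by (simp add: norm_blinfun.rep_eq blinfun_apply_blinfun_inv[OF bij])
  also have "\<dots> \<le> 1 / (1 - norm A)" by (rule norm_blinfun_inv_id_minus_le[OF A])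
  also have "\<dots> \<le> 1 / (1 - s)" using assms by (intro divide_left_mono) auto
  finally show "onorm (inv (blinfun_apply (id_blinfun - A))) \<le> 1 / (1 - s)" .
qed

lemma P_op_has_bounded_continuous_derivative:
  fixes \<Phi> :: "'a::euclidean_space \<Rightarrow> 'h::{real_inner,banach,second_countable_topology}"
  assumes kernel: "\<And>x y. k x y = \<Phi> x \<bullet> \<Phi> y"
    and integrable: "\<And>b. b \<in> Basis \<Longrightarrow> integrable \<mu> (\<lambda>x. (f x \<bullet> b) *\<^sub>R \<Phi> x)"
    and \<Phi>_der: "\<And>x. (\<Phi> has_derivative blinfun_apply (D\<Phi> x)) (at x)"
    and D\<Phi>_cont: "continuous_on UNIV D\<Phi>"
    and D\<Phi>_bound: "\<And>x. sqrt (\<Sum>b\<in>Basis. (norm (blinfun_apply (D\<Phi> x) b))\<^sup>2) \<le> B"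
  obtains Dg where "\<And>x. (P_op k \<mu> f has_derivative blinfun_apply (Dg x)) (at x)"
    and "continuous_on UNIV Dg"
    and "\<And>x. norm (Dg x) \<le> sqrt (H_norm2 (S_op \<Phi> \<mu> f)) * B"
proof
  let ?S = "Blinfun (inner_components (S_op \<Phi> \<mu> f)) :: 'h \<Rightarrow>\<^sub>L 'a"
  have "P_op k \<mu> f = (\<lambda>y. inner_components (S_op \<Phi> \<mu> f) (\<Phi> y))"
    by (intro ext) (simp add: P_op_eq_inner_components_S_op[OF kernel integrable])
  then show "(P_op k \<mu> f has_derivative blinfun_apply (?S o\<^sub>L D\<Phi> x)) (at x)" for x
    using bounded_linear.has_derivative[OF bounded_linear_inner_components \<Phi>_der]
    by (simp add: blinfun_compose.rep_eq o_def)
  show "continuous_on UNIV (\<lambda>x. ?S o\<^sub>L D\<Phi> x)"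
    by (intro continuous_intros D\<Phi>_cont)
  show "norm (?S o\<^sub>L D\<Phi> x) \<le> sqrt (H_norm2 (S_op \<Phi> \<mu> f)) * B" for x
    using norm_blinfun_le_L2_set_Basis[of "D\<Phi> x"] D\<Phi>_bound[of x]
    by (intro order_trans[OF norm_blinfun_compose] mult_mono norm_Blinfun_inner_components_le)
       (auto simp: L2_set_def H_norm2_def sum_nonneg)
qed

lemma step_size_mult_le:
  fixes L \<alpha> \<gamma> t :: real
  assumes "0 < L" "1 < \<alpha>" "\<gamma> \<le> (\<alpha> - 1) / (\<alpha> * L)" "t \<in> {0..\<gamma>}"
  shows "t * L \<le> 1 - 1 / \<alpha>"
proof -
  have "t * (\<alpha> * L) \<le> \<gamma> * (\<alpha> * L)"
    using assms by (intro mult_right_mono) auto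
  also have "\<dots> \<le> \<alpha> - 1"
    using assms by (simp add: pos_le_divide_eq)
  finally show ?thesis
    using assms by (simp add: field_simps)
qed

theorem lemma2:
  fixes V :: "'a::euclidean_space \<Rightarrow> real"
    and gradV :: "'a \<Rightarrow> 'a" and D2V :: "'a \<Rightarrow> ('a \<Rightarrow>\<^sub>L 'a)"
    and k :: "'a \<Rightarrow> 'a \<Rightarrow> real"
    and \<Phi> :: "'a \<Rightarrow> 'h::{real_inner,banach,second_countable_topology}"
    and D\<Phi> :: "'a \<Rightarrow> ('a \<Rightarrow>\<^sub>L 'h)"
    and p :: "nat \<Rightarrow> 'a \<Rightarrow> real"
    and \<gamma> \<alpha> B C :: real and n :: nat
  assumes V_C2: "\<forall>x. (V has_derivative (\<lambda>h. gradV x \<bullet> h)) (at x)"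
          "\<forall>x. (gradV has_derivative blinfun_apply (D2V x)) (at x)" "continuous_on UNIV D2V"
    and pi_normalisable: "integrable lborel (\<lambda>x. exp (- V x))"
    and kernel: "\<forall>x y. k x y = \<Phi> x \<bullet> \<Phi> y"
    and RKHS_dense: "closure (span (range \<Phi>)) = UNIV"
    and feature_C1: "\<forall>x. (\<Phi> has_derivative blinfun_apply (D\<Phi> x)) (at x)" "continuous_on UNIV D\<Phi>"
    and dens: "\<forall>m. p m \<in> borel_measurable borel \<and> (\<forall>x. 0 \<le> p m x) \<and> prob_space (dmeas (p m))"
    and P2: "integrable (dmeas (p 0)) (\<lambda>x. (norm x)\<^sup>2)"
    and S_defined: "\<forall>m. \<forall>b\<in>Basis. integrable (dmeas (p m)) (\<lambda>x. (score V (p m) x \<bullet> b) *\<^sub>R \<Phi> x)"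
    and SVGD: "\<forall>m. dmeas (p (Suc m)) =
                 distr (dmeas (p m)) lborel (\<lambda>x. x - \<gamma> *\<^sub>R P_op k (dmeas (p m)) (score V (p m)) x)"
    and A1: "B > 0" "\<forall>x. norm (\<Phi> x) \<le> B"
            "\<forall>x. sqrt (\<Sum>b\<in>Basis. (norm (blinfun_apply (D\<Phi> x) b))\<^sup>2) \<le> B"
    and A3: "C > 0" "\<forall>m. I_Stein \<Phi> V (p m) < C"
    and alpha: "\<alpha> > 1"
    and step: "0 < \<gamma>" "\<gamma> \<le> (\<alpha> - 1) / (\<alpha> * B * sqrt C)"
  shows "let g = P_op k (dmeas (p n)) (score V (p n));
             \<phi> = (\<lambda>t x. x - t *\<^sub>R g x)
         in (\<forall>x. \<forall>t\<ge>0. g differentiable (at x) \<and>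
                  onorm (\<lambda>v. t *\<^sub>R frechet_derivative g (at x) v) \<le> t * B * sqrt C)
          \<and> (\<forall>t. 0 \<le> t \<and> t < 1 / (B * sqrt C) \<longrightarrow> diffeo (\<phi> t))
          \<and> (\<forall>t\<in>{0..\<gamma>}. \<forall>x. bij (frechet_derivative (\<phi> t) (at x)) \<and>
                  onorm (inv (frechet_derivative (\<phi> t) (at x))) \<le> \<alpha>)"
proof -
  define g where "g = P_op k (dmeas (p n)) (score V (p n))"
  define L where "L = B * sqrt C"
  obtain Dg where g_der: "\<And>x. (g has_derivative blinfun_apply (Dg x)) (at x)"
    and Dg_cont: "continuous_on UNIV Dg"
    and Dg_bound: "\<And>x. norm (Dg x) \<le> sqrt (I_Stein \<Phi> V (p n)) * B"
    using P_op_has_bounded_continuous_derivative[of k \<Phi> "dmeas (p n)" "score V (p n)" D\<Phi> B]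
      kernel S_defined feature_C1 A1(3) unfolding g_def I_Stein_def by blast
  have L: "0 < L" using A1(1) A3(1) by (simp add: L_def)
  have tDg_bound: "norm (t *\<^sub>R Dg x) \<le> t * L" if "0 \<le> t" for t x
  proof -
    have "sqrt (I_Stein \<Phi> V (p n)) * B \<le> L"
      using A3(2) A1(1) by (simp add: L_def less_imp_le mult.commute)
    then show ?thesis using Dg_bound[of x] that by (simp add: mult_left_mono order_trans)
  qed
  have \<phi>_der: "frechet_derivative (\<lambda>x. x - t *\<^sub>R g x) (at x) = blinfun_apply (id_blinfun - t *\<^sub>R Dg x)" for t x
    by (rule frechet_derivative_at[symmetric])
       (auto intro!: derivative_eq_intros g_der simp: blinfun.diff_left blinfun.scaleR_left)
  have "g differentiable (at x) \<and> onorm (\<lambda>v. t *\<^sub>R frechet_derivative g (at x) v) \<le> t * L"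
    if "0 \<le> t" for t x
    using differentiableI[OF g_der] tDg_bound[OF that, of x]
    by (simp add: frechet_derivative_at[OF g_der, symmetric] norm_blinfun.rep_eq scaleR_blinfun.rep_eq)
  moreover have "diffeo (\<lambda>x. x - t *\<^sub>R g x)" if "0 \<le> t" "t < 1 / L" for t
    using that L tDg_bound[OF \<open>0 \<le> t\<close>]
    by (intro diffeo_minus_contraction[where Dg="\<lambda>x. t *\<^sub>R Dg x" and L="t * L"])
       (auto intro!: derivative_eq_intros continuous_intros g_der Dg_cont simp: field_simps scaleR_blinfun.rep_eq)
  moreover have "bij (frechet_derivative (\<lambda>x. x - t *\<^sub>R g x) (at x)) \<and>
      onorm (inv (frechet_derivative (\<lambda>x. x - t *\<^sub>R g x) (at x))) \<le> \<alpha>" if "t \<in> {0..\<gamma>}" for t x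
  proof -
    have "t * L \<le> 1 - 1 / \<alpha>"
      using step_size_mult_le[OF L alpha _ that] step(2) by (simp add: L_def mult.assoc)
    then have "norm (t *\<^sub>R Dg x) \<le> 1 - 1 / \<alpha>"
      using tDg_bound[of t x] that by simp
    then show ?thesis
      using bij_onorm_inv_id_minus_le[of "t *\<^sub>R Dg x" "1 - 1 / \<alpha>"] alpha by (simp add: \<phi>_der)
  qed
  ultimately show ?thesis
    unfolding Let_def g_def[symmetric] L_def by (auto simp: mult.assoc)
qed

end
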